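(* Let $n\geqslant 3$, let $S$ be a caterpillar species tree with canonical label vector $(s_1,\dots,s_n)$, and let $k_s,k_\ell\in\{1,\dots,n\}$ with $k_s<k_\ell$ and $k_\ell\neq 2$. Let $G$ be the caterpillar gene tree obtained from $S$ by reverse incrementation on positions $k_s,\dots,k_\ell$, i.e. with canonical label vector $(g_1,\dots,g_n)$ given by $g_k=s_{k+1}$ for $k_s\leqslant k<k_\ell$, $g_{k_\ell}=s_{k_s}$, and $g_k=s_k$ for $k\notin\{k_s,\dots,k_\ell\}$. Then the roadblock set $B_{G,S}$ consists of a set of consecutive points on the diagonal of the square lattice, i.e. $B_{G,S}=\{(i,i): a\leqslant i\leqslant b\}$ for some integers $a\leqslant b$.
   Context: All trees are binary, rooted, leaf-labeled. A caterpillar tree with $n$ leaves is one in which some internal node is descended from all other internal nodes. Its canonical label vector $(x_1,\dots,x_n)$ has $x_1,x_2$ the labels of the two leaves of the cherry (unique internal node with two descendant leaves) and, for $3\leqslant i\leqslant n$, $x_i$ the label of the leaf separated from the root by $n-i+1$ edges; vectors differing only by swapping $x_1,x_2$ describe the same tree. For caterpillars $G,S$ with canonical vectors $\mathbf g,\mathbf s$, let $\sigma(x)$ be the index of label $x$ in $\mathbf s$, $F(j)=\max\{\sigma(g_1),\dots,\sigma(g_{j+1})\}-1$ for $1\leqslant j\leqslant n-1$, and define the roadblock set $B_{G,S}=\{(i,j)\in\mathbb Z^2:1\leqslant j\leqslant i\leqslant n-1,\ i<F(j)\}$. *)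

theory Defs
  imports Main
begin

text \<open>A caterpillar with n leaves is represented by its canonical label vector
  (x_1,...,x_n), modelled as a function x :: nat => 'a that is injective on {1..n}.\<close>

definition caterpillar_vec :: "nat \<Rightarrow> (nat \<Rightarrow> 'a) \<Rightarrow> bool" where
  "caterpillar_vec n x \<longleftrightarrow> inj_on x {1..n}"

definition cat_index :: "nat \<Rightarrow> (nat \<Rightarrow> 'a) \<Rightarrow> 'a \<Rightarrow> nat" where
  "cat_index n s x = (THE i. i \<in> {1..n} \<and> s i = x)"

definition roadF :: "nat \<Rightarrow> (nat \<Rightarrow> 'a) \<Rightarrow> (nat \<Rightarrow> 'a) \<Rightarrow> int \<Rightarrow> int" where
  "roadF n g s j = int (Max ((\<lambda>k. cat_index n s (g k)) ` {1..nat j + 1})) - 1"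

definition roadblock :: "nat \<Rightarrow> (nat \<Rightarrow> 'a) \<Rightarrow> (nat \<Rightarrow> 'a) \<Rightarrow> (int \<times> int) set" where
  "roadblock n g s = {(i, j). 1 \<le> j \<and> j \<le> i \<and> i \<le> int n - 1 \<and> i < roadF n g s j}"

end

theory Submission
  imports Defs
begin

text \<open>The map \<open>k \<mapsto> \<sigma>(g\<^sub>k)\<close> is the permutation \<open>rev_incr ks kl\<close> of \<open>{1..n}\<close>, sending
  \<open>k\<close> to \<open>k + 1\<close> for \<open>ks \<le> k < kl\<close> and \<open>kl\<close> to \<open>ks\<close>. Its prefix maxima are \<open>m + 1\<close>
  for \<open>ks \<le> m < kl\<close> and \<open>m\<close> otherwise, so \<open>F(j) = j + 1\<close> for \<open>ks - 1 \<le> j \<le> kl - 2\<close>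
  and \<open>F(j) = j\<close> elsewhere. As \<open>j \<le> i < F(j)\<close>, a roadblock can only be the diagonal
  point \<open>(j, j)\<close> with \<open>j\<close> in that range, which is nonempty because \<open>kl \<ge> 3\<close>.\<close>

definition rev_incr :: "nat \<Rightarrow> nat \<Rightarrow> nat \<Rightarrow> nat" where
  "rev_incr ks kl k = (if ks \<le> k \<and> k < kl then k + 1 else if k = kl then ks else k)"

lemma cat_index_eq:
  assumes "inj_on s {1..n}" and "i \<in> {1..n}"
  shows "cat_index n s (s i) = i"
  unfolding cat_index_def
  using assms by (intro the_equality) (auto dest: inj_onD)

lemma rev_incr_in_range:
  assumes "1 \<le> ks" and "ks \<le> kl" and "kl \<le> n" and "k \<in> {1..n}"
  shows "rev_incr ks kl k \<in> {1..n}"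
  using assms unfolding rev_incr_def by auto

lemma Max_rev_incr_image:
  assumes "1 \<le> ks" and "ks < kl" and "1 \<le> m"
  shows "Max (rev_incr ks kl ` {1..m}) = (if ks \<le> m \<and> m < kl then m + 1 else m)"
    (is "_ = ?M")
proof (rule Max_eqI)
  show "finite (rev_incr ks kl ` {1..m})" by simp
  show "y \<le> ?M" if "y \<in> rev_incr ks kl ` {1..m}" for y
    using that assms(2) unfolding rev_incr_def by auto
  consider "ks \<le> m \<and> m < kl" | "m = kl" | "\<not> (ks \<le> m \<and> m < kl)" "m \<noteq> kl"
    by blast
  then show "?M \<in> rev_incr ks kl ` {1..m}"
  proof cases
    case 2
    then show ?thesis using assms unfolding rev_incr_def
      by (intro image_eqI[of _ _ "kl - 1"]) auto
  qed (use assms in \<open>auto simp: rev_incr_def intro!: image_eqI[of _ _ m]\<close>)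
qed

lemma roadF_rev_incr:
  assumes "inj_on s {1..n}" and "1 \<le> ks" and "ks < kl" and "kl \<le> n"
    and "\<forall>k\<in>{1..n}. g k = s (rev_incr ks kl k)"
    and "1 \<le> j" and "j \<le> int n - 1"
  shows "roadF n g s j = (if int ks \<le> j + 1 \<and> j + 1 < int kl then j + 1 else j)"
proof -
  have "(\<lambda>k. cat_index n s (g k)) ` {1..nat j + 1} = rev_incr ks kl ` {1..nat j + 1}"
  proof (intro image_cong)
    fix k assume "k \<in> {1..nat j + 1}"
    moreover have "nat j + 1 \<le> n" using assms(6,7) by linarith
    ultimately have k: "k \<in> {1..n}" by auto
    then have "rev_incr ks kl k \<in> {1..n}" using assms(2-4) by (intro rev_incr_in_range) auto
    with k show "cat_index n s (g k) = rev_incr ks kl k" using assms(1,5) by (simp add: cat_index_eq)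
  qed simp
  then show ?thesis
    using assms Max_rev_incr_image[of ks kl "nat j + 1"] unfolding roadF_def by auto
qed

lemma roadblock_rev_incr:
  assumes "inj_on s {1..n}" and "1 \<le> ks" and "ks < kl" and "kl \<le> n"
    and "\<forall>k\<in>{1..n}. g k = s (rev_incr ks kl k)"
  shows "roadblock n g s = {(i, i) | i. max 1 (int ks - 1) \<le> i \<and> i \<le> int kl - 2}"
proof (intro set_eqI iffI)
  fix p assume "p \<in> roadblock n g s"
  then obtain i j where p: "p = (i, j)" "1 \<le> j" "j \<le> i" "i \<le> int n - 1" "i < roadF n g s j"
    unfolding roadblock_def by auto
  with roadF_rev_incr[OF assms, of j]
  show "p \<in> {(i, i) | i. max 1 (int ks - 1) \<le> i \<and> i \<le> int kl - 2}"
    by (auto split: if_splits)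
next
  fix p assume "p \<in> {(i, i) | i. max 1 (int ks - 1) \<le> i \<and> i \<le> int kl - 2}"
  then obtain i where p: "p = (i, i)" "1 \<le> i" "int ks - 1 \<le> i" "i \<le> int kl - 2"
    by auto
  with roadF_rev_incr[OF assms, of i] assms(4) show "p \<in> roadblock n g s"
    unfolding roadblock_def by auto
qed

theorem proposition7:
  fixes n ks kl :: nat and s g :: "nat \<Rightarrow> 'a"
  assumes "n \<ge> 3"
    and "caterpillar_vec n s"
    and "ks \<in> {1..n}" and "kl \<in> {1..n}" and "ks < kl" and "kl \<noteq> 2"
    and "\<forall>k\<in>{1..n}. g k = (if ks \<le> k \<and> k < kl then s (k + 1)
                           else if k = kl then s ks else s k)"
  shows "\<exists>a b :: int. a \<le> b \<and> roadblock n g s = {(i, i) | i. a \<le> i \<and> i \<le> b}"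
proof (intro exI conjI)
  show "max 1 (int ks - 1) \<le> int kl - 2"
    using assms(3,5,6) by auto
  have "\<forall>k\<in>{1..n}. g k = s (rev_incr ks kl k)"
    using assms(7) unfolding rev_incr_def by auto
  with assms(2-5) show "roadblock n g s = {(i, i) | i. max 1 (int ks - 1) \<le> i \<and> i \<le> int kl - 2}"
    unfolding caterpillar_vec_def by (intro roadblock_rev_incr) auto
qed

end
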